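(* Assume that the linear program $$\min_{q\ge0}\sum_{s,a}q(s,a)c(s,a)\ \text{ s.t. }\ \sum_{a}q(s,a)=1+\sum_{s'\in\mathcal S,a}q(s',a)\hat P(s|s',a)\ \ \forall s\in\mathcal S$$ has a feasible solution. Then the optimal value of Program (A) $$\max_{x\in\mathbb{R}^N}\sum_{s\in\mathcal S}x_s\ \text{ s.t. }\ x_s\le c(s,a)+\sum_{s'}\hat P(s'|s,a)x_{s'}+\mathrm{CB}_{\min}(s,a)(x)\ \ \forall s\in\mathcal S,a\in\mathcal A(s)$$ equals the optimal value of Program (B) $$\min_{q\ge 0,\ \tilde P}\ \sum_{s,a}q(s,a)c(s,a)\ \text{ s.t. }\ \tilde P(\cdot|s,a)\in\mathcal P_\epsilon(s,a)\ \forall (s,a),\quad \sum_a q(s,a)=1+\sum_{s',a}q(s',a)\tilde P(s|s',a)\ \ \forall s\in\mathcal S,$$ i.e. there is no duality gap between (A) and (B).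
   Context: SSP setting with finite states $\mathcal S=\{1,\dots,N\}$, finite action sets $\mathcal A(s)$, known costs $c(s,a)\in[0,1]$, and an estimated substochastic transition function $\hat P(s'|s,a)\ge0$, $\sum_{s'\in\mathcal S}\hat P(s'|s,a)\le 1$. Let $\Delta_{\mathcal S}=\{p\in\mathbb{R}^{\mathcal S}: p\ge0,\ \sum_{s'}p_{s'}\le1\}$. Let $D:\mathbb{R}_{\ge0}^{\mathcal S}\times\mathbb{R}_{\ge0}^{\mathcal S}\to[0,\infty)$ be jointly convex, with $D(p,p)=0$, and positively homogeneous: $D(\alpha p,\alpha p')=\alpha D(p,p')$ for all $\alpha\ge0$. Let $\epsilon(s,a)>0$. Define $\mathcal P_\epsilon(s,a)=\{\tilde p\in\Delta_{\mathcal S}: D(\tilde p,\hat P(\cdot|s,a))\le\epsilon(s,a)\}$ and, for $x\in\mathbb{R}^N$, $\mathrm{CB}_{\min}(s,a)(x)=\min_{\tilde p\in\mathcal P_\epsilon(s,a)}\sum_{s'\in\mathcal S}(\tilde p_{s'}-\hat P(s'|s,a))x_{s'}$. *)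

theory Defs
  imports Complex_Main "HOL-Library.Extended_Real"
begin

definition subprob_simplex :: "('s::finite \<Rightarrow> real) set" where
  "subprob_simplex = {p. (\<forall>s. 0 \<le> p s) \<and> (\<Sum>s\<in>UNIV. p s) \<le> 1}"

definition nonneg_vec :: "('s \<Rightarrow> real) \<Rightarrow> bool" where
  "nonneg_vec p \<longleftrightarrow> (\<forall>s. 0 \<le> p s)"

definition divergence_ok :: "(('s \<Rightarrow> real) \<Rightarrow> ('s \<Rightarrow> real) \<Rightarrow> real) \<Rightarrow> bool" where
  "divergence_ok D \<longleftrightarrow>
     (\<forall>p p'. nonneg_vec p \<and> nonneg_vec p' \<longrightarrow> 0 \<le> D p p') \<and>
     (\<forall>p. nonneg_vec p \<longrightarrow> D p p = 0) \<and>
     (\<forall>p p' r r' t. nonneg_vec p \<and> nonneg_vec p' \<and> nonneg_vec r \<and> nonneg_vec r'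
        \<and> 0 \<le> t \<and> t \<le> 1 \<longrightarrow>
        D (\<lambda>s. t * p s + (1 - t) * r s) (\<lambda>s. t * p' s + (1 - t) * r' s)
          \<le> t * D p p' + (1 - t) * D r r') \<and>
     (\<forall>p p' (\<alpha>::real). nonneg_vec p \<and> nonneg_vec p' \<and> 0 \<le> \<alpha> \<longrightarrow>
        D (\<lambda>s. \<alpha> * p s) (\<lambda>s. \<alpha> * p' s) = \<alpha> * D p p')"

definition Peps ::
  "(('s::finite \<Rightarrow> real) \<Rightarrow> ('s \<Rightarrow> real) \<Rightarrow> real) \<Rightarrow> ('s \<Rightarrow> 'a \<Rightarrow> 's \<Rightarrow> real)
   \<Rightarrow> ('s \<Rightarrow> 'a \<Rightarrow> real) \<Rightarrow> 's \<Rightarrow> 'a \<Rightarrow> ('s \<Rightarrow> real) set" where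
  "Peps D Phat eps s a = {p \<in> subprob_simplex. D p (Phat s a) \<le> eps s a}"

text \<open>CB_min, written as an infimum (the paper's min).\<close>
definition CBmin ::
  "(('s::finite \<Rightarrow> real) \<Rightarrow> ('s \<Rightarrow> real) \<Rightarrow> real) \<Rightarrow> ('s \<Rightarrow> 'a \<Rightarrow> 's \<Rightarrow> real)
   \<Rightarrow> ('s \<Rightarrow> 'a \<Rightarrow> real) \<Rightarrow> 's \<Rightarrow> 'a \<Rightarrow> ('s \<Rightarrow> real) \<Rightarrow> real" where
  "CBmin D Phat eps s a x =
     Inf ((\<lambda>p. \<Sum>s'\<in>UNIV. (p s' - Phat s a s') * x s') ` Peps D Phat eps s a)"

definition feasA ::
  "('s::finite \<Rightarrow> 'a set) \<Rightarrow> ('s \<Rightarrow> 'a \<Rightarrow> real) \<Rightarrow> (('s \<Rightarrow> real) \<Rightarrow> ('s \<Rightarrow> real) \<Rightarrow> real)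
   \<Rightarrow> ('s \<Rightarrow> 'a \<Rightarrow> 's \<Rightarrow> real) \<Rightarrow> ('s \<Rightarrow> 'a \<Rightarrow> real) \<Rightarrow> ('s \<Rightarrow> real) set" where
  "feasA A c D Phat eps = {x. \<forall>s. \<forall>a\<in>A s.
      x s \<le> c s a + (\<Sum>s'\<in>UNIV. Phat s a s' * x s') + CBmin D Phat eps s a x}"

definition feasB ::
  "('s::finite \<Rightarrow> 'a set) \<Rightarrow> (('s \<Rightarrow> real) \<Rightarrow> ('s \<Rightarrow> real) \<Rightarrow> real)
   \<Rightarrow> ('s \<Rightarrow> 'a \<Rightarrow> 's \<Rightarrow> real) \<Rightarrow> ('s \<Rightarrow> 'a \<Rightarrow> real)
   \<Rightarrow> (('s \<Rightarrow> 'a \<Rightarrow> real) \<times> ('s \<Rightarrow> 'a \<Rightarrow> 's \<Rightarrow> real)) set" where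
  "feasB A D Phat eps = {(q, P).
      (\<forall>s. \<forall>a\<in>A s. 0 \<le> q s a \<and> P s a \<in> Peps D Phat eps s a) \<and>
      (\<forall>s. (\<Sum>a\<in>A s. q s a) = 1 + (\<Sum>s'\<in>UNIV. \<Sum>a\<in>A s'. q s' a * P s' a s))}"

definition occ_cost :: "('s::finite \<Rightarrow> 'a set) \<Rightarrow> ('s \<Rightarrow> 'a \<Rightarrow> real) \<Rightarrow> ('s \<Rightarrow> 'a \<Rightarrow> real) \<Rightarrow> real" where
  "occ_cost A c q = (\<Sum>s\<in>UNIV. \<Sum>a\<in>A s. q s a * c s a)"

end

theory Submission
  imports Defs "HOL-Analysis.Analysis"
begin

text \<open>Weak duality: the robust constraint of (A) holds for every kernel P from the
  uncertainty sets, so integrating it against an occupancy measure q that is balanced for P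
  gives \<Sum>x \<le> cost q.

  Strong duality: the pairs (t, b) with t above the cost of some q \<ge> 0 and b the residual
  of its flow equations under kernels from the uncertainty sets form a convex cone M, since
  two flows through (s, a) merge into one flow through a mixture of the two kernels and the
  uncertainty sets are convex. If r is below the value V of (B), then (r, 1) is not in the
  closure of M: a nearby point of M has residual at least 1 - \<eta>; rescaling it and lowering
  the visits to a fixpoint of the flow equations with residual exactly 1 yields a feasible
  point of (B) of cost below V. A hyperplane separating (r, 1) from M has a normal
  (\<alpha>, w) with \<alpha> > 0, and x = -w/\<alpha> is feasible for (A) with \<Sum>x > r.\<close>

section \<open>Occupancy measures and flow balance\<close>

definition visits :: "('s::finite \<Rightarrow> 'a set) \<Rightarrow> ('s \<Rightarrow> 'a \<Rightarrow> real) \<Rightarrow> 's \<Rightarrow> real" where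
  "visits A q s = (\<Sum>a\<in>A s. q s a)"

definition inflow ::
  "('s::finite \<Rightarrow> 'a set) \<Rightarrow> ('s \<Rightarrow> 'a \<Rightarrow> real) \<Rightarrow> ('s \<Rightarrow> 'a \<Rightarrow> 's \<Rightarrow> real) \<Rightarrow> 's \<Rightarrow> real" where
  "inflow A q P s = (\<Sum>s'\<in>UNIV. \<Sum>a\<in>A s'. q s' a * P s' a s)"

lemma mono_fixpoint_between:
  fixes F :: "('i \<Rightarrow> real) \<Rightarrow> 'i \<Rightarrow> real"
  assumes mono: "mono F" and F0: "(\<lambda>_. 0) \<le> F (\<lambda>_. 0)" and Q0: "(\<lambda>_. 0) \<le> Q" and FQ: "F Q \<le> Q"
  shows "\<exists>Y. (\<lambda>_. 0) \<le> Y \<and> Y \<le> Q \<and> F Y = Y"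
proof -
  define S where "S = {Z. (\<lambda>_. 0) \<le> Z \<and> F Z \<le> Z}"
  define Y where "Y i = (INF Z\<in>S. Z i)" for i
  have Q_in: "Q \<in> S" using Q0 FQ by (simp add: S_def)
  have bdd: "bdd_below ((\<lambda>Z. Z i) ` S)" for i
    by (rule bdd_belowI[of _ 0]) (auto simp: S_def le_fun_def)
  have Y_lower: "Y \<le> Z" if "Z \<in> S" for Z
    unfolding le_fun_def Y_def using that bdd by (auto intro: cINF_lower)
  have Y_nonneg: "(\<lambda>_. 0) \<le> Y"
    unfolding le_fun_def Y_def using Q_in by (auto intro!: cINF_greatest simp: S_def le_fun_def)
  have FY: "F Y \<le> Y"
  proof (rule le_funI)
    fix i
    have "F Y i \<le> Z i" if "Z \<in> S" for Z
      using monoD[OF mono Y_lower[OF that]] that by (auto simp: S_def le_fun_def intro: order_trans)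
    then show "F Y i \<le> Y i" unfolding Y_def using Q_in by (auto intro: cINF_greatest)
  qed
  have "F Y \<in> S"
    using F0 monoD[OF mono Y_nonneg] monoD[OF mono FY] by (auto simp: S_def)
  then have "Y \<le> F Y" by (rule Y_lower)
  with FY Y_nonneg Y_lower[OF Q_in] show ?thesis by (metis antisym)
qed

text \<open>The smaller occupancy measure keeps the action proportions of q; its state visits
  are a fixpoint of the flow equation with initial distribution b', found below visits A q.\<close>
lemma balanced_occupancy_shrink:
  fixes q :: "'s::finite \<Rightarrow> 'a \<Rightarrow> real"
  assumes fin: "\<And>s. finite (A s)"
    and P_nonneg: "\<And>s a s'. a \<in> A s \<Longrightarrow> 0 \<le> P s a s'"
    and q_nonneg: "\<And>s a. a \<in> A s \<Longrightarrow> 0 \<le> q s a"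
    and bal: "\<And>s. visits A q s = b s + inflow A q P s"
    and b'_nonneg: "\<And>s. 0 \<le> b' s" and b'_le: "\<And>s. b' s \<le> b s"
  shows "\<exists>q'. (\<forall>s. \<forall>a\<in>A s. 0 \<le> q' s a \<and> q' s a \<le> q s a) \<and>
    (\<forall>s. visits A q' s = b' s + inflow A q' P s)"
proof -
  define \<pi> where "\<pi> s a = q s a / visits A q s" for s a
  define scale where "scale Y s a = Y s * \<pi> s a" for Y :: "'s \<Rightarrow> real" and s a
  define F where "F Y s = b' s + inflow A (scale Y) P s" for Y s
  have visits_nonneg: "0 \<le> visits A q s" for s
    unfolding visits_def using q_nonneg by (auto intro: sum_nonneg)
  have \<pi>_nonneg: "a \<in> A s \<Longrightarrow> 0 \<le> \<pi> s a" for s a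
    using q_nonneg visits_nonneg by (simp add: \<pi>_def)
  have scale_visits: "a \<in> A s \<Longrightarrow> scale (visits A q) s a = q s a" for s a
  proof (cases "visits A q s = 0")
    case True
    assume "a \<in> A s"
    then have "q s a = 0"
      using True q_nonneg fin[of s] by (simp add: visits_def sum_nonneg_eq_0_iff)
    then show ?thesis using True by (simp add: scale_def)
  qed (simp add: scale_def \<pi>_def)
  have visits_scale: "visits A (scale Y) s = Y s" if "0 \<le> Y s" "Y s \<le> visits A q s" for Y s
  proof (cases "visits A q s = 0")
    case False
    then show ?thesis
      by (simp add: visits_def scale_def \<pi>_def sum_distrib_left[symmetric] sum_divide_distrib[symmetric])
  qed (use that in \<open>simp add: visits_def scale_def\<close>)
  have "mono F"
  proof (rule monoI, rule le_funI)
    fix Y Z :: "'s \<Rightarrow> real" and s assume "Y \<le> Z"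
    then show "F Y s \<le> F Z s"
      unfolding F_def inflow_def scale_def using \<pi>_nonneg P_nonneg
      by (intro add_left_mono sum_mono mult_right_mono) (auto simp: le_fun_def)
  qed
  moreover have "(\<lambda>_. 0) \<le> F (\<lambda>_. 0)"
    using b'_nonneg by (simp add: le_fun_def F_def inflow_def scale_def)
  moreover have "(\<lambda>_. 0) \<le> visits A q"
    using visits_nonneg by (simp add: le_fun_def)
  moreover have "F (visits A q) \<le> visits A q"
  proof (rule le_funI)
    fix s
    have "inflow A (scale (visits A q)) P s = inflow A q P s"
      unfolding inflow_def by (intro sum.cong refl) (simp add: scale_visits)
    then show "F (visits A q) s \<le> visits A q s"
      using bal[of s] b'_le[of s] by (simp add: F_def)
  qed
  ultimately obtain Y where Y: "(\<lambda>_. 0) \<le> Y" "Y \<le> visits A q" "F Y = Y"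
    using mono_fixpoint_between by blast
  have visits_Y: "visits A (scale Y) s = Y s" for s
    using Y(1,2) by (intro visits_scale) (auto simp: le_fun_def)
  show ?thesis
  proof (intro exI[of _ "scale Y"] conjI allI ballI)
    fix s a assume a: "a \<in> A s"
    show "0 \<le> scale Y s a"
      using Y(1) \<pi>_nonneg[OF a] by (simp add: scale_def le_fun_def)
    have "scale Y s a \<le> scale (visits A q) s a"
      using Y(2) \<pi>_nonneg[OF a] by (simp add: scale_def le_fun_def mult_right_mono)
    then show "scale Y s a \<le> q s a" by (simp add: scale_visits[OF a])
  next
    fix s
    show "visits A (scale Y) s = b' s + inflow A (scale Y) P s"
      using fun_cong[OF Y(3), of s] by (simp add: visits_Y F_def)
  qed
qed

lemma sum_le_occ_cost:
  fixes x :: "'s::finite \<Rightarrow> real"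
  assumes q_nonneg: "\<And>s a. a \<in> A s \<Longrightarrow> 0 \<le> q s a"
    and bal: "\<And>s. visits A q s = 1 + inflow A q P s"
    and x_le: "\<And>s a. a \<in> A s \<Longrightarrow> x s \<le> c s a + (\<Sum>s'\<in>UNIV. P s a s' * x s')"
  shows "(\<Sum>s\<in>UNIV. x s) \<le> occ_cost A c q"
proof -
  define flow where "flow = (\<Sum>s\<in>UNIV. \<Sum>a\<in>A s. \<Sum>s'\<in>UNIV. q s a * P s a s' * x s')"
  have inflow_flow: "(\<Sum>s\<in>UNIV. inflow A q P s * x s) = flow"
    unfolding flow_def inflow_def sum_distrib_right
    by (subst sum.swap) (simp add: sum.swap[of _ "A _"])
  have "(\<Sum>s\<in>UNIV. x s) + flow = (\<Sum>s\<in>UNIV. visits A q s * x s)"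
    by (simp add: bal distrib_right sum.distrib inflow_flow)
  also have "\<dots> \<le> (\<Sum>s\<in>UNIV. \<Sum>a\<in>A s. q s a * (c s a + (\<Sum>s'\<in>UNIV. P s a s' * x s')))"
    unfolding visits_def sum_distrib_right
    using q_nonneg x_le by (intro sum_mono mult_left_mono) auto
  also have "\<dots> = occ_cost A c q + flow"
    by (simp add: occ_cost_def flow_def distrib_left sum.distrib sum_distrib_left mult.assoc)
  finally show ?thesis by simp
qed

section \<open>Uncertainty sets and the robust constraint\<close>

lemma Peps_nonneg: "p \<in> Peps D Phat eps s a \<Longrightarrow> 0 \<le> p i"
  by (simp add: Peps_def subprob_simplex_def)

lemma Peps_le_1:
  assumes "p \<in> Peps D Phat eps s a"
  shows "p i \<le> 1"
proof -
  have "p i \<le> (\<Sum>j\<in>UNIV. p j)"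
    using Peps_nonneg[OF assms] by (intro member_le_sum) auto
  also have "\<dots> \<le> 1" using assms by (simp add: Peps_def subprob_simplex_def)
  finally show ?thesis .
qed

lemma Phat_in_Peps:
  assumes "divergence_ok D" "\<And>i. 0 \<le> Phat s a i" "(\<Sum>i\<in>UNIV. Phat s a i) \<le> 1" "0 \<le> eps s a"
  shows "Phat s a \<in> Peps D Phat eps s a"
  using assms by (simp add: Peps_def subprob_simplex_def divergence_ok_def nonneg_vec_def)

lemma Peps_convex_combination:
  assumes D_ok: "divergence_ok D" and Phat_nonneg: "\<And>i. 0 \<le> Phat s a i"
    and p1: "p1 \<in> Peps D Phat eps s a" and p2: "p2 \<in> Peps D Phat eps s a"
    and \<mu>: "0 \<le> \<mu>" "\<mu> \<le> 1"
  shows "(\<lambda>i. \<mu> * p1 i + (1 - \<mu>) * p2 i) \<in> Peps D Phat eps s a"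
proof -
  have nonneg: "nonneg_vec p1" "nonneg_vec p2" "nonneg_vec (Phat s a)"
    using Peps_nonneg[OF p1] Peps_nonneg[OF p2] Phat_nonneg by (auto simp: nonneg_vec_def)
  have "D (\<lambda>i. \<mu> * p1 i + (1 - \<mu>) * p2 i) (\<lambda>i. \<mu> * Phat s a i + (1 - \<mu>) * Phat s a i)
      \<le> \<mu> * D p1 (Phat s a) + (1 - \<mu>) * D p2 (Phat s a)"
    using D_ok nonneg \<mu> unfolding divergence_ok_def by blast
  also have "\<dots> \<le> \<mu> * eps s a + (1 - \<mu>) * eps s a"
    using p1 p2 \<mu> by (intro add_mono mult_left_mono) (auto simp: Peps_def)
  finally have "D (\<lambda>i. \<mu> * p1 i + (1 - \<mu>) * p2 i) (Phat s a) \<le> eps s a"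
    by (simp add: algebra_simps)
  moreover have "(\<Sum>i\<in>UNIV. \<mu> * p1 i + (1 - \<mu>) * p2 i) \<le> \<mu> * 1 + (1 - \<mu>) * 1"
    unfolding sum.distrib sum_distrib_left[symmetric]
    using p1 p2 \<mu> by (intro add_mono mult_left_mono) (auto simp: Peps_def subprob_simplex_def)
  ultimately show ?thesis
    using nonneg \<mu> by (simp add: Peps_def subprob_simplex_def nonneg_vec_def)
qed

lemma Peps_weighted_mix:
  assumes D_ok: "divergence_ok D" and Phat_nonneg: "\<And>i. 0 \<le> Phat s a i"
    and p1: "p1 \<in> Peps D Phat eps s a" and p2: "p2 \<in> Peps D Phat eps s a"
    and w: "0 \<le> w1" "0 \<le> w2"
  shows "\<exists>p\<in>Peps D Phat eps s a. \<forall>i. (w1 + w2) * p i = w1 * p1 i + w2 * p2 i"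
proof (cases "w1 + w2 = 0")
  case True
  then have "w1 = 0" "w2 = 0" using w by auto
  then show ?thesis using p1 by auto
next
  case False
  define \<mu> where "\<mu> = w1 / (w1 + w2)"
  have "0 \<le> \<mu>" "\<mu> \<le> 1" using w False by (auto simp: \<mu>_def divide_le_eq_1)
  moreover have "(w1 + w2) * (\<mu> * p1 i + (1 - \<mu>) * p2 i) = w1 * p1 i + w2 * p2 i" for i
  proof -
    have "1 - \<mu> = w2 / (w1 + w2)" using False by (simp add: \<mu>_def field_simps)
    then show ?thesis using False by (simp add: \<mu>_def distrib_left)
  qed
  ultimately show ?thesis
    using Peps_convex_combination[OF D_ok Phat_nonneg p1 p2]
    by (intro bexI[of _ "\<lambda>i. \<mu> * p1 i + (1 - \<mu>) * p2 i"]) auto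
qed

lemma bdd_below_Peps_image:
  "bdd_below ((\<lambda>p. \<Sum>s'\<in>UNIV. (p s' - Phat s a s') * x s') ` Peps D Phat eps s a)"
proof (rule bdd_belowI2)
  fix p assume p: "p \<in> Peps D Phat eps s a"
  have "\<bar>p s' * x s'\<bar> \<le> \<bar>x s'\<bar>" for s'
    unfolding abs_mult using Peps_nonneg[OF p, of s'] Peps_le_1[OF p, of s']
    by (intro mult_left_le_one_le) auto
  then have "- \<bar>x s'\<bar> - Phat s a s' * x s' \<le> (p s' - Phat s a s') * x s'" for s'
    by (metis abs_le_iff diff_right_mono left_diff_distrib minus_le_iff)
  then show "(\<Sum>s'\<in>UNIV. - \<bar>x s'\<bar> - Phat s a s' * x s') \<le> (\<Sum>s'\<in>UNIV. (p s' - Phat s a s') * x s')"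
    by (rule sum_mono)
qed

lemma feasA_iff_robust:
  assumes nonempty: "\<And>s a. a \<in> A s \<Longrightarrow> Peps D Phat eps s a \<noteq> {}"
  shows "x \<in> feasA A c D Phat eps \<longleftrightarrow>
    (\<forall>s. \<forall>a\<in>A s. \<forall>p\<in>Peps D Phat eps s a. x s \<le> c s a + (\<Sum>s'\<in>UNIV. p s' * x s'))"
proof -
  have robust: "x s \<le> c s a + (\<Sum>s'\<in>UNIV. Phat s a s' * x s') + CBmin D Phat eps s a x \<longleftrightarrow>
      (\<forall>p\<in>Peps D Phat eps s a. x s \<le> c s a + (\<Sum>s'\<in>UNIV. p s' * x s'))"
    if a: "a \<in> A s" for s a
  proof -
    let ?gap = "\<lambda>p. \<Sum>s'\<in>UNIV. (p s' - Phat s a s') * x s'"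
    have gap: "?gap p = (\<Sum>s'\<in>UNIV. p s' * x s') - (\<Sum>s'\<in>UNIV. Phat s a s' * x s')" for p
      by (simp add: left_diff_distrib sum_subtractf)
    have "x s \<le> c s a + (\<Sum>s'\<in>UNIV. Phat s a s' * x s') + CBmin D Phat eps s a x \<longleftrightarrow>
        x s - c s a - (\<Sum>s'\<in>UNIV. Phat s a s' * x s') \<le> Inf (?gap ` Peps D Phat eps s a)"
      unfolding CBmin_def by linarith
    also have "\<dots> \<longleftrightarrow> (\<forall>p\<in>Peps D Phat eps s a. x s - c s a - (\<Sum>s'\<in>UNIV. Phat s a s' * x s') \<le> ?gap p)"
      using nonempty[OF a] bdd_below_Peps_image by (rule le_cINF_iff)
    finally show ?thesis by (simp add: gap diff_le_eq add.commute)
  qed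
  show ?thesis unfolding feasA_def using robust by auto
qed

section \<open>Separation from a convex cone\<close>

lemma convex_cone_separating_hyperplane:
  fixes z :: "'a::euclidean_space"
  assumes S: "convex_cone S" and z: "z \<notin> closure S"
  shows "\<exists>a. inner a z < 0 \<and> (\<forall>x\<in>S. 0 \<le> inner a x)"
proof -
  have "convex (closure S)" using S by (simp add: convex_cone_def)
  then obtain a \<beta> where a: "inner a z < \<beta>" "\<And>x. x \<in> closure S \<Longrightarrow> \<beta> < inner a x"
    using separating_hyperplane_closed_point[OF _ closed_closure z] by blast
  have \<beta>_neg: "\<beta> < 0"
    using a(2)[OF closure_subset[THEN subsetD, OF convex_cone_contains_0[OF S]]] by simp
  have "0 \<le> inner a x" if x: "x \<in> S" for x
  proof (rule ccontr)
    assume "\<not> 0 \<le> inner a x"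
    then have "0 < \<beta> / inner a x" using \<beta>_neg by (simp add: divide_neg_neg)
    then have "(\<beta> / inner a x) *\<^sub>R x \<in> closure S"
      using closure_subset convex_cone_scaleR[OF S _ x] by (meson less_imp_le subsetD)
    then show False using a(2) \<open>\<not> 0 \<le> inner a x\<close> by fastforce
  qed
  with a(1) \<beta>_neg show ?thesis by (intro exI[of _ a]) auto
qed

lemma closure_prod_cart_approachable:
  fixes S :: "(real \<times> (real^'n)) set"
  assumes "(r, v) \<in> closure S" "0 < \<eta>"
  shows "\<exists>t b. (t, b) \<in> S \<and> \<bar>t - r\<bar> < \<eta> \<and> (\<forall>i. \<bar>b$i - v$i\<bar> < \<eta>)"
proof -
  obtain t b where tb: "(t, b) \<in> S" "dist (t, b) (r, v) < \<eta>"
    using assms unfolding closure_approachable by auto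
  have "\<bar>t - r\<bar> < \<eta>"
    using dist_fst_le[of "(t, b)" "(r, v)"] tb(2) by (simp add: dist_real_def)
  moreover have "\<bar>b$i - v$i\<bar> < \<eta>" for i
  proof -
    have "\<bar>(b - v)$i\<bar> \<le> dist b v" unfolding dist_norm by (rule component_le_norm_cart)
    also have "\<dots> \<le> dist (t, b) (r, v)" by (rule dist_snd_le[of "(t, b)" "(r, v)", simplified])
    finally show ?thesis using tb(2) by simp
  qed
  ultimately show ?thesis using tb(1) by blast
qed

section \<open>Duality\<close>

text \<open>Only the signs of c and eps matter below.\<close>
locale robust_ssp =
  fixes A :: "'s::finite \<Rightarrow> 'a set"
    and c :: "'s \<Rightarrow> 'a \<Rightarrow> real"
    and Phat :: "'s \<Rightarrow> 'a \<Rightarrow> 's \<Rightarrow> real"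
    and D :: "('s \<Rightarrow> real) \<Rightarrow> ('s \<Rightarrow> real) \<Rightarrow> real"
    and eps :: "'s \<Rightarrow> 'a \<Rightarrow> real"
  assumes fin_A: "\<And>s. finite (A s)"
    and c_nonneg: "\<And>s a. a \<in> A s \<Longrightarrow> 0 \<le> c s a"
    and Phat_nonneg: "\<And>s a s'. a \<in> A s \<Longrightarrow> 0 \<le> Phat s a s'"
    and Phat_sub: "\<And>s a. a \<in> A s \<Longrightarrow> (\<Sum>s'\<in>UNIV. Phat s a s') \<le> 1"
    and D_ok: "divergence_ok D"
    and eps_nonneg: "\<And>s a. a \<in> A s \<Longrightarrow> 0 \<le> eps s a"
begin

lemma Phat_in: "a \<in> A s \<Longrightarrow> Phat s a \<in> Peps D Phat eps s a"
  by (intro Phat_in_Peps D_ok Phat_nonneg Phat_sub eps_nonneg)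

lemma feasA_iff:
  "x \<in> feasA A c D Phat eps \<longleftrightarrow>
    (\<forall>s. \<forall>a\<in>A s. \<forall>p\<in>Peps D Phat eps s a. x s \<le> c s a + (\<Sum>s'\<in>UNIV. p s' * x s'))"
  using Phat_in by (intro feasA_iff_robust) blast

lemma feasB_iff:
  "(q, P) \<in> feasB A D Phat eps \<longleftrightarrow>
    (\<forall>s. \<forall>a\<in>A s. 0 \<le> q s a \<and> P s a \<in> Peps D Phat eps s a) \<and>
    (\<forall>s. visits A q s = 1 + inflow A q P s)"
  by (simp add: feasB_def visits_def inflow_def)

lemma weak_duality:
  assumes x: "x \<in> feasA A c D Phat eps" and qP: "(q, P) \<in> feasB A D Phat eps"
  shows "(\<Sum>s\<in>UNIV. x s) \<le> occ_cost A c q"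
  using qP x by (intro sum_le_occ_cost[of A q P]) (auto simp: feasB_iff feasA_iff)

lemma occ_cost_mono:
  "(\<And>s a. a \<in> A s \<Longrightarrow> q1 s a \<le> q2 s a) \<Longrightarrow> occ_cost A c q1 \<le> occ_cost A c q2"
  unfolding occ_cost_def using c_nonneg by (intro sum_mono mult_right_mono) auto

text \<open>Program (B) asks for the least t with (t, 1) in this set.\<close>
definition cost_residual_set :: "(real \<times> (real^'s)) set" where
  "cost_residual_set = {(t, b). \<exists>q P.
      (\<forall>s. \<forall>a\<in>A s. 0 \<le> q s a \<and> P s a \<in> Peps D Phat eps s a) \<and>
      occ_cost A c q \<le> t \<and> (\<forall>s. b$s = visits A q s - inflow A q P s)}"

lemma cost_residual_setI:
  assumes "\<And>s a. a \<in> A s \<Longrightarrow> 0 \<le> q s a" "\<And>s a. a \<in> A s \<Longrightarrow> P s a \<in> Peps D Phat eps s a"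
    and "occ_cost A c q \<le> t" "\<And>s. b$s = visits A q s - inflow A q P s"
  shows "(t, b) \<in> cost_residual_set"
  using assms unfolding cost_residual_set_def by blast

lemma cost_residual_setE:
  assumes "(t, b) \<in> cost_residual_set"
  obtains q P where "\<And>s a. a \<in> A s \<Longrightarrow> 0 \<le> q s a" "\<And>s a. a \<in> A s \<Longrightarrow> P s a \<in> Peps D Phat eps s a"
    and "occ_cost A c q \<le> t" "\<And>s. b$s = visits A q s - inflow A q P s"
  using assms unfolding cost_residual_set_def by blast

lemma nonneg_cost_in_cost_residual_set: "0 \<le> t \<Longrightarrow> (t, 0) \<in> cost_residual_set"
  using Phat_in
  by (intro cost_residual_setI[of "\<lambda>_ _. 0" Phat]) (auto simp: occ_cost_def visits_def inflow_def)

lemma cost_residual_set_add: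
  assumes "(t1, b1) \<in> cost_residual_set" "(t2, b2) \<in> cost_residual_set"
  shows "(t1 + t2, b1 + b2) \<in> cost_residual_set"
proof -
  obtain q1 P1 where
    q1: "\<And>s a. a \<in> A s \<Longrightarrow> 0 \<le> q1 s a" "\<And>s a. a \<in> A s \<Longrightarrow> P1 s a \<in> Peps D Phat eps s a"
      "occ_cost A c q1 \<le> t1" "\<And>s. b1$s = visits A q1 s - inflow A q1 P1 s"
    using cost_residual_setE[OF assms(1)] by blast
  obtain q2 P2 where
    q2: "\<And>s a. a \<in> A s \<Longrightarrow> 0 \<le> q2 s a" "\<And>s a. a \<in> A s \<Longrightarrow> P2 s a \<in> Peps D Phat eps s a"
      "occ_cost A c q2 \<le> t2" "\<And>s. b2$s = visits A q2 s - inflow A q2 P2 s"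
    using cost_residual_setE[OF assms(2)] by blast
  let ?q = "\<lambda>s a. q1 s a + q2 s a"
  define P where "P s a = (SOME p. p \<in> Peps D Phat eps s a \<and>
      (\<forall>i. ?q s a * p i = q1 s a * P1 s a i + q2 s a * P2 s a i))" for s a
  have P: "P s a \<in> Peps D Phat eps s a \<and>
      (\<forall>i. ?q s a * P s a i = q1 s a * P1 s a i + q2 s a * P2 s a i)" if a: "a \<in> A s" for s a
  proof -
    from Peps_weighted_mix[OF D_ok Phat_nonneg[OF a] q1(2)[OF a] q2(2)[OF a] q1(1)[OF a] q2(1)[OF a]]
    have "\<exists>p. p \<in> Peps D Phat eps s a \<and> (\<forall>i. ?q s a * p i = q1 s a * P1 s a i + q2 s a * P2 s a i)"
      by (simp only: Bex_def)
    then show ?thesis unfolding P_def by (rule someI_ex)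
  qed
  have "inflow A ?q P s = inflow A q1 P1 s + inflow A q2 P2 s" for s
    unfolding inflow_def sum.distrib[symmetric] by (intro sum.cong refl) (use P in blast)
  moreover have "visits A ?q s = visits A q1 s + visits A q2 s" for s
    by (simp add: visits_def sum.distrib)
  moreover have "occ_cost A c ?q = occ_cost A c q1 + occ_cost A c q2"
    by (simp add: occ_cost_def sum.distrib distrib_right)
  ultimately show ?thesis
  proof (intro cost_residual_setI[of ?q P])
    fix s a assume "a \<in> A s"
    then show "0 \<le> ?q s a" "P s a \<in> Peps D Phat eps s a" using q1(1) q2(1) P by auto
  qed (use q1 q2 in auto)
qed

lemma cost_residual_set_scaleR:
  assumes "(t, b) \<in> cost_residual_set" "0 \<le> k"
  shows "(k * t, k *\<^sub>R b) \<in> cost_residual_set"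
proof -
  obtain q P where
    q: "\<And>s a. a \<in> A s \<Longrightarrow> 0 \<le> q s a" "\<And>s a. a \<in> A s \<Longrightarrow> P s a \<in> Peps D Phat eps s a"
      "occ_cost A c q \<le> t" "\<And>s. b$s = visits A q s - inflow A q P s"
    using cost_residual_setE[OF assms(1)] by blast
  let ?q = "\<lambda>s a. k * q s a"
  have "occ_cost A c ?q = k * occ_cost A c q"
    by (simp add: occ_cost_def sum_distrib_left mult.assoc)
  moreover have "visits A ?q s - inflow A ?q P s = k * (visits A q s - inflow A q P s)" for s
    by (simp add: visits_def inflow_def sum_distrib_left right_diff_distrib mult.assoc)
  ultimately show ?thesis
    using q \<open>0 \<le> k\<close> by (intro cost_residual_setI[of ?q P]) (auto intro: mult_left_mono)
qed

lemma convex_cone_cost_residual_set: "convex_cone cost_residual_set"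
  unfolding convex_cone_iff
  using nonneg_cost_in_cost_residual_set[of 0] cost_residual_set_add cost_residual_set_scaleR
  by (auto simp: zero_prod_def)

lemma unit_residual_in_cost_residual_set:
  assumes a: "a \<in> A s" and p: "p \<in> Peps D Phat eps s a"
  shows "(c s a, \<chi> s'. of_bool (s' = s) - p s') \<in> cost_residual_set"
proof -
  define e where "e s' a' = (if s' = s \<and> a' = a then 1 else 0 :: real)" for s' a'
  define P where "P s' a' = (if s' = s \<and> a' = a then p else Phat s' a')" for s' a'
  have visits_e: "visits A e s' = of_bool (s' = s)" for s'
    using a fin_A by (simp add: visits_def e_def)
  have unit_sum: "(\<Sum>s'\<in>UNIV. \<Sum>a'\<in>A s'. if s' = s \<and> a' = a then v else 0) = v" for v :: real
  proof -
    have "(\<Sum>a'\<in>A s'. if s' = s \<and> a' = a then v else 0) = (if s' = s then v else 0)" for s'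
      using a fin_A by (cases "s' = s") simp_all
    then show ?thesis by simp
  qed
  have "e s' a' * P s' a' i = (if s' = s \<and> a' = a then p i else 0)" for s' a' i
    by (simp add: e_def P_def)
  then have inflow_e: "inflow A e P i = p i" for i
    by (simp add: inflow_def unit_sum)
  have "e s' a' * c s' a' = (if s' = s \<and> a' = a then c s a else 0)" for s' a'
    by (simp add: e_def)
  then have "occ_cost A c e = c s a"
    by (simp add: occ_cost_def unit_sum)
  then show ?thesis
    using p Phat_in by (intro cost_residual_setI[of e P]) (auto simp: e_def P_def visits_e inflow_e)
qed

lemma feasB_within_scaled_cost:
  assumes tb: "(t, b) \<in> cost_residual_set" and \<beta>: "0 < \<beta>" "\<And>s. \<beta> \<le> b$s"
  shows "\<exists>q P. (q, P) \<in> feasB A D Phat eps \<and> occ_cost A c q \<le> t / \<beta>"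
proof -
  obtain q P where q: "\<And>s a. a \<in> A s \<Longrightarrow> 0 \<le> q s a" "\<And>s a. a \<in> A s \<Longrightarrow> P s a \<in> Peps D Phat eps s a"
    "occ_cost A c q \<le> t" "\<And>s. b$s = visits A q s - inflow A q P s"
    using cost_residual_setE[OF tb] by blast
  let ?q = "\<lambda>s a. q s a / \<beta>"
  have "visits A ?q s = b$s / \<beta> + inflow A ?q P s" for s
    using q(4)[of s] by (simp add: visits_def inflow_def sum_divide_distrib[symmetric] diff_divide_distrib)
  moreover have "1 \<le> b$s / \<beta>" for s using \<beta> by simp
  ultimately obtain q' where q': "\<And>s a. a \<in> A s \<Longrightarrow> 0 \<le> q' s a \<and> q' s a \<le> q s a / \<beta>"
    "\<And>s. visits A q' s = 1 + inflow A q' P s"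
    using balanced_occupancy_shrink[of A P ?q "\<lambda>s. b$s / \<beta>" "\<lambda>_. 1"] fin_A q(1,2) \<beta>(1)
    Peps_nonneg by (metis zero_le_one divide_nonneg_pos)
  have "(q', P) \<in> feasB A D Phat eps" using q' q(2) by (simp add: feasB_iff)
  moreover have "occ_cost A c q' \<le> occ_cost A c ?q" using q'(1) by (intro occ_cost_mono) blast
  moreover have "occ_cost A c ?q = occ_cost A c q / \<beta>"
    by (simp add: occ_cost_def sum_divide_distrib)
  ultimately show ?thesis using q(3) \<beta>(1) by (metis divide_right_mono less_imp_le order_trans)
qed

lemma ones_notin_closure_cost_residual_set:
  assumes lower: "\<And>q P. (q, P) \<in> feasB A D Phat eps \<Longrightarrow> V \<le> occ_cost A c q" and "r < V"
  shows "(r, \<chi> s. 1) \<notin> closure cost_residual_set"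
proof
  assume "(r, \<chi> s. 1) \<in> closure cost_residual_set"
  \<comment> \<open>\<eta> is small enough that (r + \<eta>) / (1 - \<eta>) < V\<close>
  obtain \<eta> :: real where \<eta>: "0 < \<eta>" "\<eta> < 1" "\<eta> < (V - r) / (1 + \<bar>V\<bar>)"
    using field_lbound_gt_zero[of 1 "(V - r) / (1 + \<bar>V\<bar>)"] \<open>r < V\<close> by auto
  obtain t b where tb: "(t, b) \<in> cost_residual_set" "\<bar>t - r\<bar> < \<eta>" "\<And>s. \<bar>b$s - 1\<bar> < \<eta>"
    using closure_prod_cart_approachable[OF \<open>(r, \<chi> s. 1) \<in> _\<close> \<eta>(1)] by auto
  have "1 - \<eta> \<le> b$s" for s using tb(3)[of s] by linarith
  then obtain q P where "(q, P) \<in> feasB A D Phat eps" "occ_cost A c q \<le> t / (1 - \<eta>)"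
    using feasB_within_scaled_cost[OF tb(1), of "1 - \<eta>"] \<eta>(2) by auto
  then have "V * (1 - \<eta>) \<le> t"
    using lower \<eta>(2) by (metis order_trans pos_le_divide_eq diff_gt_0_iff_gt)
  moreover have "t < V * (1 - \<eta>)"
  proof -
    have "\<eta> * (1 + \<bar>V\<bar>) < V - r" using \<eta>(3) by (simp add: pos_less_divide_eq mult.commute)
    moreover have "\<eta> * V \<le> \<eta> * \<bar>V\<bar>" using \<eta>(1) by (simp add: mult_left_mono)
    ultimately show ?thesis using tb(2) by (simp add: algebra_simps)
  qed
  ultimately show False by simp
qed

lemma exists_feasA_above:
  assumes feasible: "(q0, P0) \<in> feasB A D Phat eps"
    and lower: "\<And>q P. (q, P) \<in> feasB A D Phat eps \<Longrightarrow> V \<le> occ_cost A c q" and "r < V"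
  shows "\<exists>x\<in>feasA A c D Phat eps. r < (\<Sum>s\<in>UNIV. x s)"
proof -
  obtain \<alpha> w where sep: "\<alpha> * r + (\<Sum>s\<in>UNIV. w$s) < 0"
    and nonneg: "\<And>t b. (t, b) \<in> cost_residual_set \<Longrightarrow> 0 \<le> \<alpha> * t + (\<Sum>s\<in>UNIV. w$s * b$s)"
    using convex_cone_separating_hyperplane[OF convex_cone_cost_residual_set
        ones_notin_closure_cost_residual_set[OF lower \<open>r < V\<close>]]
    by (fastforce simp: inner_vec_def)
  have "(occ_cost A c q0, \<chi> s. 1) \<in> cost_residual_set"
    using feasible by (intro cost_residual_setI[of q0 P0]) (auto simp: feasB_iff)
  then have "\<alpha> \<noteq> 0" using nonneg sep by fastforce
  moreover have "0 \<le> \<alpha>"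
    using nonneg[OF nonneg_cost_in_cost_residual_set[of 1]] by simp
  ultimately have \<alpha>: "0 < \<alpha>" by simp
  define x where "x s = - w$s / \<alpha>" for s
  have "x \<in> feasA A c D Phat eps"
    unfolding feasA_iff
  proof (intro allI ballI)
    fix s a p assume "a \<in> A s" "p \<in> Peps D Phat eps s a"
    from nonneg[OF unit_residual_in_cost_residual_set[OF this]]
    have "0 \<le> \<alpha> * c s a + w$s - (\<Sum>s'\<in>UNIV. w$s' * p s')"
      by (simp add: right_diff_distrib sum_subtractf)
    then show "x s \<le> c s a + (\<Sum>s'\<in>UNIV. p s' * x s')"
      using \<alpha> by (simp add: x_def sum_divide_distrib[symmetric] sum_negf mult.commute field_simps)
  qed
  moreover have "r < (\<Sum>s\<in>UNIV. x s)"
    using sep \<alpha> by (simp add: x_def sum_divide_distrib[symmetric] sum_negf field_simps)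
  ultimately show ?thesis by blast
qed

end

theorem mainTheorem3:
  fixes A :: "'s::finite \<Rightarrow> 'a set"
    and c :: "'s \<Rightarrow> 'a \<Rightarrow> real"
    and Phat :: "'s \<Rightarrow> 'a \<Rightarrow> 's \<Rightarrow> real"
    and D :: "('s \<Rightarrow> real) \<Rightarrow> ('s \<Rightarrow> real) \<Rightarrow> real"
    and eps :: "'s \<Rightarrow> 'a \<Rightarrow> real"
  assumes fin_A: "\<And>s. finite (A s)"
    and cost: "\<And>s a. a \<in> A s \<Longrightarrow> 0 \<le> c s a \<and> c s a \<le> 1"
    and Phat_nonneg: "\<And>s a s'. a \<in> A s \<Longrightarrow> 0 \<le> Phat s a s'"
    and Phat_sub: "\<And>s a. a \<in> A s \<Longrightarrow> (\<Sum>s'\<in>UNIV. Phat s a s') \<le> 1"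
    and D_ok: "divergence_ok D"
    and eps_pos: "\<And>s a. a \<in> A s \<Longrightarrow> 0 < eps s a"
    and LP_feasible: "\<exists>q. (\<forall>s. \<forall>a\<in>A s. 0 \<le> q s a) \<and>
        (\<forall>s. (\<Sum>a\<in>A s. q s a) = 1 + (\<Sum>s'\<in>UNIV. \<Sum>a\<in>A s'. q s' a * Phat s' a s))"
  shows "(SUP x\<in>feasA A c D Phat eps. ereal (\<Sum>s\<in>UNIV. x s))
       = (INF qP\<in>feasB A D Phat eps. ereal (occ_cost A c (fst qP)))"
    (is "?primal = ?dual")
proof -
  interpret robust_ssp A c Phat D eps
    using fin_A cost Phat_nonneg Phat_sub D_ok eps_pos by unfold_locales (auto intro: less_imp_le)
  obtain q0 where q0: "(q0, Phat) \<in> feasB A D Phat eps"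
    using LP_feasible Phat_in by (auto simp: feasB_def)
  show ?thesis
  proof (rule antisym)
    show "?primal \<le> ?dual"
      using weak_duality by (auto intro!: SUP_least INF_greatest)
  next
    show "?dual \<le> ?primal"
    proof (rule dense_le)
      fix y assume "y < ?dual"
      then obtain V where "y < ereal V" and V: "ereal V < ?dual" using ereal_dense2 by blast
      then obtain r where r: "y < ereal r" "r < V" using ereal_dense2 by fastforce
      have "V \<le> occ_cost A c q" if "(q, P) \<in> feasB A D Phat eps" for q P
        using less_le_trans[OF V INF_lower[OF that]] by simp
      then obtain x where "x \<in> feasA A c D Phat eps" "r < (\<Sum>s\<in>UNIV. x s)"
        using exists_feasA_above[OF q0 _ r(2)] by blast
      then have "ereal r \<le> ?primal"
        by (metis SUP_upper ereal_less_eq(3) less_imp_le order_trans)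
      with r(1) show "y \<le> ?primal" by simp
    qed
  qed
qed

end
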